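(* Let $G=(V,E,m,w)$ be a weighted graph admitting an intrinsic metric $\rho$ such that every ball $B_R(x)=\{y\in V:\rho(y,x)\le R\}$ ($x\in V$, $R>0$) is a finite set and the jump size $s:=\sup_{x\sim y}\rho(x,y)$ is finite. Suppose $G$ has polynomial volume growth with respect to $\rho$, i.e. there are $x_0\in V$ and constants $\alpha, C$ such that $m(B_R(x_0))\le C(1+R)^{\alpha}$ for all $R>0$. Then for all real $k\ge 1$, $$\dim \widetilde{\mathcal{P}}_{2k}(G)\le (k+1)\dim \mathcal{H}_{2k}(G).$$
   Context: A weighted graph $G=(V,E,m,w)$ consists of a locally finite, simple, undirected, connected graph $(V,E)$, a symmetric edge weight $w:E\to(0,\infty)$, $\{x,y\}\mapsto w_{xy}=w_{yx}$ (extended by $w_{xy}=0$ if $x\not\sim y$), and a vertex weight $m:V\to(0,\infty)$; $m(\Omega)=\sum_{x\in\Omega}m_x$. The Laplacian is $\Delta f(x)=\sum_{y\sim x}\frac{w_{xy}}{m_x}(f(y)-f(x))$. A (pseudo)metric $\rho:V\times V\to[0,\infty)$ (symmetric, triangle inequality, $\rho(x,x)=0$) is intrinsic if $\sum_{y\sim x}w_{xy}\rho^2(x,y)\le m_x$ for all $x\in V$. $\mathcal{H}_k(G)$ is the space of functions $f$ on $V$ with $\Delta f=0$ such that there exist $x_0\in V$ and $C_f$ with $\sup_{x\in B_R(x_0)}|f(x)|\le C_f(1+R)^k$ for all $R>0$. Let $\mathbb{Z}_-=\mathbb{Z}\cap(-\infty,0]$. An ancient solution of the discrete-time heat equation is a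 function $v$ on $V\times\mathbb{Z}_-$ with $v(x,t)-v(x,t-1)=\Delta v(x,t)$ for all $x\in V$, $t\in\mathbb{Z}_-$. $\widetilde{\mathcal{P}}_k(G)$ is the space of such ancient solutions $v$ for which there are $x_0\in V$ and $C_v$ with $\sup_{(x,t)\in B_R(x_0)\times([-R^2,0]\cap\mathbb{Z})}|v(x,t)|\le C_v(1+R)^k$ for all $R>0$. *)

theory Defs
  imports "HOL-Analysis.Analysis" "HOL-Library.Function_Algebras"
begin

text \<open>Weighted graphs. Vertices are the elements of the type 'v (V = UNIV).
  Edge weights w x y (with w x y = 0 iff x, y not adjacent), vertex weights m.\<close>

definition adj :: "('v \<Rightarrow> 'v \<Rightarrow> real) \<Rightarrow> 'v \<Rightarrow> 'v \<Rightarrow> bool" where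
  "adj w x y \<longleftrightarrow> w x y > 0"

definition weighted_graph :: "('v \<Rightarrow> real) \<Rightarrow> ('v \<Rightarrow> 'v \<Rightarrow> real) \<Rightarrow> bool" where
  "weighted_graph m w \<longleftrightarrow>
     (\<forall>x y. w x y = w y x) \<and> (\<forall>x y. w x y \<ge> 0) \<and> (\<forall>x. w x x = 0) \<and>
     (\<forall>x. m x > 0) \<and>
     (\<forall>x. finite {y. adj w x y}) \<and>
     (\<forall>x y. (adj w)\<^sup>*\<^sup>* x y)"

definition laplacian :: "('v \<Rightarrow> real) \<Rightarrow> ('v \<Rightarrow> 'v \<Rightarrow> real) \<Rightarrow> ('v \<Rightarrow> real) \<Rightarrow> 'v \<Rightarrow> real" where
  "laplacian m w f x = (\<Sum>y\<in>{y. adj w x y}. w x y / m x * (f y - f x))"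

definition pseudometric :: "('v \<Rightarrow> 'v \<Rightarrow> real) \<Rightarrow> bool" where
  "pseudometric \<rho> \<longleftrightarrow> (\<forall>x y. \<rho> x y \<ge> 0) \<and> (\<forall>x y. \<rho> x y = \<rho> y x) \<and> (\<forall>x. \<rho> x x = 0)
     \<and> (\<forall>x y z. \<rho> x z \<le> \<rho> x y + \<rho> y z)"

definition intrinsic :: "('v \<Rightarrow> real) \<Rightarrow> ('v \<Rightarrow> 'v \<Rightarrow> real) \<Rightarrow> ('v \<Rightarrow> 'v \<Rightarrow> real) \<Rightarrow> bool" where
  "intrinsic m w \<rho> \<longleftrightarrow> pseudometric \<rho> \<and>
     (\<forall>x. (\<Sum>y\<in>{y. adj w x y}. w x y * (\<rho> x y)\<^sup>2) \<le> m x)"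

definition rball :: "('v \<Rightarrow> 'v \<Rightarrow> real) \<Rightarrow> 'v \<Rightarrow> real \<Rightarrow> 'v set" where
  "rball \<rho> x R = {y. \<rho> y x \<le> R}"

definition harm_poly :: "('v \<Rightarrow> real) \<Rightarrow> ('v \<Rightarrow> 'v \<Rightarrow> real) \<Rightarrow> ('v \<Rightarrow> 'v \<Rightarrow> real) \<Rightarrow> real \<Rightarrow> ('v \<Rightarrow> real) set" where
  "harm_poly m w \<rho> k = {f. (\<forall>x. laplacian m w f x = 0) \<and>
     (\<exists>x0 C. \<forall>R>0. \<forall>x\<in>rball \<rho> x0 R. \<bar>f x\<bar> \<le> C * (1 + R) powr k)}"

text \<open>A function on V \<times> Z_- is represented as a function on
  V \<times> Z that vanishes for t > 0 (this normalisation identifies the two spaces linearly).\<close>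
definition ancient_poly :: "('v \<Rightarrow> real) \<Rightarrow> ('v \<Rightarrow> 'v \<Rightarrow> real) \<Rightarrow> ('v \<Rightarrow> 'v \<Rightarrow> real) \<Rightarrow> real \<Rightarrow> ('v \<times> int \<Rightarrow> real) set" where
  "ancient_poly m w \<rho> k = {v. (\<forall>x t. t > 0 \<longrightarrow> v (x, t) = 0) \<and>
     (\<forall>x t. t \<le> 0 \<longrightarrow> v (x, t) - v (x, t - 1) = laplacian m w (\<lambda>y. v (y, t)) x) \<and>
     (\<exists>x0 C. \<forall>R>0. \<forall>x\<in>rball \<rho> x0 R. \<forall>t::int. - (R\<^sup>2) \<le> real_of_int t \<and> t \<le> 0 \<longrightarrow>
        \<bar>v (x, t)\<bar> \<le> C * (1 + R) powr k)}"

definition fscale :: "real \<Rightarrow> ('a \<Rightarrow> real) \<Rightarrow> ('a \<Rightarrow> real)" where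
  "fscale c f = (\<lambda>x. c * f x)"

definition fdim :: "('a \<Rightarrow> real) set \<Rightarrow> ereal" where
  "fdim S = (if \<exists>B. finite B \<and> \<not> module.dependent fscale B
                   \<and> module.span fscale B = module.span fscale S
             then ereal (real (Vector_Spaces.vector_space.dim fscale S)) else \<infinity>)"

end

theory Submission
  imports Defs
begin

text \<open>Read backwards in time, an ancient solution \<open>v\<close> becomes the sequence \<open>u n = v(\<cdot>, -n)\<close> with
  \<open>u (n + 1) = u n - \<Delta> (u n)\<close>.  A Caccioppoli inequality, built on the cutoff
  \<open>min 1 (max 0 (2 - \<rho> x x0 / R))\<close> which is \<open>1/R\<close>-Lipschitz with respect to the intrinsic metric,
  shows that each application of \<open>-\<Delta>\<close> lowers the space-time \<open>L\<^sup>2\<close> growth exponent of \<open>u\<close> by \<open>2\<close>;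
  since polynomial volume growth makes that exponent finite, \<open>(-\<Delta>) ^ J\<close> kills \<open>u\<close> for some \<open>J\<close>.
  In time, \<open>(-\<Delta>) ^ j u\<close> is the \<open>j\<close>-th forward difference of \<open>u\<close>, so once \<open>(-\<Delta>) ^ (j + 1) u = 0\<close> it
  is constant in \<open>n\<close>, and the growth \<open>O(n ^ k)\<close> of \<open>u\<close> forces it to vanish when \<open>j > k\<close>.  Hence
  \<open>(-\<Delta>) ^ (K + 1) v(\<cdot>, 0) = 0\<close> for \<open>K = \<lfloor>k\<rfloor>\<close>, and the kernels of \<open>v \<mapsto> (-\<Delta>) ^ i v(\<cdot>, 0)\<close>,
  \<open>i \<le> K + 1\<close>, filter the ancient solutions in \<open>K + 1\<close> steps, each of which maps into the
  harmonic functions; the first kernel is trivial since \<open>v\<close> is determined by \<open>v(\<cdot>, 0)\<close>.\<close>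

section \<open>Finite differences\<close>

definition fwd_diff :: "nat \<Rightarrow> (nat \<Rightarrow> real) \<Rightarrow> nat \<Rightarrow> real" where
  "fwd_diff h a n = a (n + h) - a n"

lemma fwd_diff_commute: "fwd_diff p (fwd_diff q a) = fwd_diff q (fwd_diff p a)"
  by (rule ext) (simp add: fwd_diff_def algebra_simps)

lemma funpow_fwd_diff_commute: "(fwd_diff q ^^ j) (fwd_diff p a) = fwd_diff p ((fwd_diff q ^^ j) a)"
  by (induction j) (auto simp: fwd_diff_commute)

lemma fwd_diff_eq_sum_fwd_diff_1: "fwd_diff h a n = (\<Sum>r<h. fwd_diff 1 a (n + r))"
  by (induction h) (auto simp: fwd_diff_def)

lemma funpow_fwd_diff_of_const:
  assumes "\<And>n. (fwd_diff 1 ^^ j) a n = c"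
  shows "(fwd_diff h ^^ j) a n = real h ^ j * c"
  using assms
proof (induction j arbitrary: a c)
  case 0
  then show ?case by simp
next
  case (Suc j)
  have "(fwd_diff 1 ^^ j) (fwd_diff h a) n' = real h * c" for n'
  proof -
    have "(fwd_diff 1 ^^ j) (fwd_diff h a) n' = (\<Sum>r<h. fwd_diff 1 ((fwd_diff 1 ^^ j) a) (n' + r))"
      by (simp add: funpow_fwd_diff_commute fwd_diff_eq_sum_fwd_diff_1[of h])
    also have "\<dots> = real h * c"
      using Suc.prems by (simp add: funpow_fwd_diff_commute[symmetric])
    finally show ?thesis .
  qed
  then show ?case
    using Suc.IH[of "fwd_diff h a"] by (simp add: funpow_fwd_diff_commute[symmetric])
qed

lemma funpow_fwd_diff_bound:
  assumes "\<And>n'. n \<le> n' \<Longrightarrow> n' \<le> n + j * h \<Longrightarrow> \<bar>a n'\<bar> \<le> M"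
  shows "\<bar>(fwd_diff h ^^ j) a n\<bar> \<le> 2 ^ j * M"
  using assms
proof (induction j arbitrary: a M)
  case 0
  then show ?case by simp
next
  case (Suc j)
  have "\<bar>fwd_diff h a n'\<bar> \<le> 2 * M" if "n \<le> n'" "n' \<le> n + j * h" for n'
    using Suc.prems[of n'] Suc.prems[of "n' + h"] that unfolding fwd_diff_def by fastforce
  then have "\<bar>(fwd_diff h ^^ j) (fwd_diff h a) n\<bar> \<le> 2 ^ j * (2 * M)"
    using Suc.IH by blast
  then show ?case by (simp add: funpow_fwd_diff_commute)
qed

lemma eq_0_if_abs_le_powr_neg:
  fixes c :: real
  assumes "e > 0" and "\<And>R. R \<ge> R0 \<Longrightarrow> \<bar>c\<bar> \<le> K * R powr - e"
  shows "c = 0"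
proof -
  have "((\<lambda>R. K * R powr - e) \<longlongrightarrow> K * 0) at_top"
    by (intro tendsto_mult tendsto_const tendsto_neg_powr filterlim_ident) (use assms in auto)
  moreover have "eventually (\<lambda>R. \<bar>c\<bar> \<le> K * R powr - e) at_top"
    using assms(2) eventually_at_top_linorder by blast
  ultimately have "\<bar>c\<bar> \<le> K * 0"
    by (intro tendsto_le[OF _ _ tendsto_const]) auto
  then show ?thesis by simp
qed

lemma nat_floor_bounds:
  fixes x :: real
  assumes "1 \<le> x"
  shows "1 \<le> nat \<lfloor>x\<rfloor>" and "real (nat \<lfloor>x\<rfloor>) \<le> x" and "x \<le> 2 * real (nat \<lfloor>x\<rfloor>)"
proof -
  have "1 \<le> \<lfloor>x\<rfloor>" using assms by (simp add: le_floor_iff)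
  then have n: "real (nat \<lfloor>x\<rfloor>) = of_int \<lfloor>x\<rfloor>" by simp
  show "1 \<le> nat \<lfloor>x\<rfloor>" using \<open>1 \<le> \<lfloor>x\<rfloor>\<close> by arith
  show "real (nat \<lfloor>x\<rfloor>) \<le> x" unfolding n by (rule of_int_floor_le)
  show "x \<le> 2 * real (nat \<lfloor>x\<rfloor>)"
    unfolding n using real_of_int_floor_add_one_gt[of x] \<open>1 \<le> \<lfloor>x\<rfloor>\<close> by linarith
qed

text \<open>The \<open>j\<close>-th differences with step \<open>h \<approx> R\<^sup>2 / j\<close> equal \<open>h ^ j * c\<close>, of order \<open>R ^ (2 * j)\<close>,
  but are \<open>O(R powr p)\<close> by the growth bound.\<close>
lemma funpow_fwd_diff_const_eq_0:
  fixes a :: "nat \<Rightarrow> real"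
  assumes diff: "\<And>n. (fwd_diff 1 ^^ j) a n = c"
    and p: "0 \<le> p" "p < 2 * real j" and C: "0 \<le> C"
    and bound: "\<And>R n. R \<ge> R0 \<Longrightarrow> real n \<le> R\<^sup>2 \<Longrightarrow> \<bar>a n\<bar> \<le> C * (1 + R) powr p"
  shows "c = 0"
proof (rule eq_0_if_abs_le_powr_neg)
  show "2 * real j - p > 0" using p by simp
  have "j \<noteq> 0" using p by auto
  then have j: "real j \<ge> 1" by simp
  fix R assume R: "R \<ge> max R0 (real j)"
  then have R1: "R \<ge> 1" and R0: "R > 0" using j by auto
  have "R\<^sup>2 / real j \<ge> 1"
    using R j mult_mono[of "real j" R 1 R] by (simp add: power2_eq_square field_simps)
  then obtain h :: nat where h: "1 \<le> h" "real h \<le> R\<^sup>2 / real j" "R\<^sup>2 / real j \<le> 2 * real h"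
    using nat_floor_bounds by blast
  have "\<bar>a n\<bar> \<le> C * (1 + R) powr p" if "n \<le> 0 + j * h" for n
  proof (rule bound)
    show "R \<ge> R0" using R by simp
    have "real n \<le> real j * real h" using that by (simp flip: of_nat_mult)
    also have "\<dots> \<le> R\<^sup>2" using h(2) j by (simp add: field_simps)
    finally show "real n \<le> R\<^sup>2" .
  qed
  then have "\<bar>(fwd_diff h ^^ j) a 0\<bar> \<le> 2 ^ j * (C * (1 + R) powr p)"
    by (intro funpow_fwd_diff_bound) auto
  then have ch: "real h ^ j * \<bar>c\<bar> \<le> 2 ^ j * (C * (1 + R) powr p)"
    using funpow_fwd_diff_of_const[OF diff] by (simp add: abs_mult)
  have "(R\<^sup>2 / (2 * real j)) ^ j * \<bar>c\<bar> \<le> real h ^ j * \<bar>c\<bar>"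
    using h(3) j by (intro mult_right_mono power_mono) (auto simp: field_simps)
  also have "\<dots> \<le> 2 ^ j * (C * (1 + R) powr p)" by (rule ch)
  also have "\<dots> \<le> 2 ^ j * (C * (2 powr p * R powr p))"
    using powr_mono2[of p "1 + R" "2 * R"] R1 p C by (intro mult_left_mono) (auto simp: powr_mult)
  finally have "(R\<^sup>2 / (2 * real j)) ^ j * \<bar>c\<bar> \<le> 2 ^ j * (C * (2 powr p * R powr p))" .
  moreover have "(R\<^sup>2 / (2 * real j)) ^ j = R powr (2 * real j) / (2 * real j) ^ j"
    using powr_realpow[OF R0, of "2 * j"] by (simp add: power_divide flip: power_mult)
  ultimately have "\<bar>c\<bar> \<le> 2 ^ j * C * 2 powr p * (2 * real j) ^ j * (R powr p / R powr (2 * real j))"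
    using R0 j by (simp add: field_simps)
  then show "\<bar>c\<bar> \<le> 2 ^ j * C * 2 powr p * (2 * real j) ^ j * R powr - (2 * real j - p)"
    by (simp add: powr_diff[symmetric])
qed

section \<open>Dimension bounds from filtrations\<close>

context vector_space_pair
begin

lemma span_card_bound_kernel_image:
  assumes S: "vs1.subspace S" and f: "Vector_Spaces.linear s1 s2 f" and BH: "finite BH"
    and img: "f ` S \<subseteq> vs2.span BH"
    and ker: "{v \<in> S. f v = 0} \<subseteq> vs1.span T"
  shows "\<exists>T'. finite T' \<and> card T' \<le> card BH \<and> S \<subseteq> vs1.span (T \<union> T')"
proof -
  interpret f: Vector_Spaces.linear s1 s2 f by (rule f)
  obtain C where C: "C \<subseteq> f ` S" "vs2.independent C" "f ` S \<subseteq> vs2.span C"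
    using vs2.maximal_independent_subset by blast
  have C_fin: "finite C" "card C \<le> card BH"
    using vs2.independent_span_bound[OF BH C(2)] C(1) img by auto
  obtain T' where T': "T' \<subseteq> S" "inj_on f T'" "C = f ` T'"
    using C(1) subset_image_inj by metis
  have span_T': "vs1.span T' \<subseteq> S"
    using vs1.span_minimal[OF T'(1) S] .
  have "v \<in> vs1.span (T \<union> T')" if v: "v \<in> S" for v
  proof -
    have "f v \<in> f ` vs1.span T'"
      using v C(3) T'(3) f.span_image by auto
    then obtain u where u: "u \<in> vs1.span T'" "f u = f v" by auto
    have "v - u \<in> S" using vs1.subspace_diff[OF S v] u(1) span_T' by blast
    moreover have "f (v - u) = 0" using u(2) f.diff by simp
    ultimately have "v - u \<in> vs1.span T" using ker by blast
    then have "(v - u) + u \<in> vs1.span (T \<union> T')"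
      using u(1) vs1.span_mono[of T "T \<union> T'"] vs1.span_mono[of T' "T \<union> T'"]
      by (intro vs1.span_add) auto
    then show ?thesis by simp
  qed
  moreover have "finite T'" "card T' \<le> card BH"
    using C_fin T'(2,3) card_image[OF T'(2)] finite_image_iff[OF T'(2)] by simp_all
  ultimately show ?thesis by blast
qed

text \<open>Induction along the filtration \<open>{v \<in> P. L i v = 0}\<close>: \<open>L i\<close> maps stage \<open>i + 1\<close> into
  \<open>span BH\<close> with kernel stage \<open>i\<close>.\<close>
lemma span_card_bound_filtration:
  assumes P: "vs1.subspace P" and L: "\<And>i. Vector_Spaces.linear s1 s2 (L i)" and BH: "finite BH"
    and inj: "\<And>v. v \<in> P \<Longrightarrow> L 0 v = 0 \<Longrightarrow> v = 0"
    and top: "\<And>v. v \<in> P \<Longrightarrow> L (Suc K) v = 0"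
    and img: "\<And>i v. v \<in> P \<Longrightarrow> L (Suc i) v = 0 \<Longrightarrow> L i v \<in> vs2.span BH"
  shows "\<exists>T. finite T \<and> card T \<le> Suc K * card BH \<and> P \<subseteq> vs1.span T"
proof -
  have "\<exists>T. finite T \<and> card T \<le> i * card BH \<and> {v \<in> P. L i v = 0} \<subseteq> vs1.span T" for i
  proof (induction i)
    case 0
    show ?case using inj vs1.span_zero by (intro exI[of _ "{}"]) auto
  next
    case (Suc i)
    then obtain T where T: "finite T" "card T \<le> i * card BH" "{v \<in> P. L i v = 0} \<subseteq> vs1.span T"
      by blast
    interpret Li: Vector_Spaces.linear s1 s2 "L (Suc i)" by (rule L)
    have sub: "vs1.subspace {v \<in> P. L (Suc i) v = 0}"
      using vs1.subspace_inter[OF P Li.subspace_kernel] by (simp add: Int_def)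
    have img': "L i ` {v \<in> P. L (Suc i) v = 0} \<subseteq> vs2.span BH" using img by blast
    have ker: "{u \<in> {v \<in> P. L (Suc i) v = 0}. L i u = 0} \<subseteq> vs1.span T" using T(3) by blast
    obtain T' where "finite T'" "card T' \<le> card BH"
      "{v \<in> P. L (Suc i) v = 0} \<subseteq> vs1.span (T \<union> T')"
      using span_card_bound_kernel_image[OF sub L BH img' ker] by blast
    moreover have "card (T \<union> T') \<le> Suc i * card BH"
      using card_Un_le[of T T'] T(2) \<open>card T' \<le> card BH\<close> by simp
    ultimately show ?case using T(1) by blast
  qed
  from this[of "Suc K"] top show ?thesis by auto
qed

end

lemma vector_space_fscale: "vector_space (fscale :: real \<Rightarrow> ('a \<Rightarrow> real) \<Rightarrow> _)"
  by unfold_locales (auto simp: fscale_def algebra_simps)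

interpretation fs: vector_space "fscale :: real \<Rightarrow> ('a \<Rightarrow> real) \<Rightarrow> _"
  by (rule vector_space_fscale)

lemma fdim_eq_card_basis:
  assumes "finite B" "fs.independent B" "fs.span B = fs.span S"
  shows "fdim S = ereal (card B)"
  unfolding fdim_def using assms fs.dim_eq_card[OF assms(3,2)] by auto

lemma fdim_le_card_spanning:
  assumes "finite T" "S \<subseteq> fs.span T"
  shows "fdim S \<le> ereal (card T)"
proof -
  obtain B where B: "B \<subseteq> S" "fs.independent B" "S \<subseteq> fs.span B"
    using fs.maximal_independent_subset by blast
  have "finite B" "card B \<le> card T"
    using fs.independent_span_bound[OF assms(1) B(2)] B(1) assms(2) by auto
  moreover have "fs.span B = fs.span S"
    using fs.span_mono[OF B(1)] fs.span_minimal[OF B(3) fs.subspace_span] by blast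
  ultimately show ?thesis using fdim_eq_card_basis[of B S] B(2) by simp
qed

lemma fdim_le_mult_fdim:
  assumes c: "real n \<le> c" "0 < c"
    and span: "\<And>BH. finite BH \<Longrightarrow> H \<subseteq> fs.span BH \<Longrightarrow>
      \<exists>T. finite T \<and> card T \<le> n * card BH \<and> S \<subseteq> fs.span T"
  shows "fdim S \<le> ereal c * fdim H"
proof (cases "\<exists>B. finite B \<and> fs.independent B \<and> fs.span B = fs.span H")
  case False
  then have "fdim H = \<infinity>" by (auto simp: fdim_def)
  then show ?thesis using c(2) by simp
next
  case True
  then obtain BH where BH: "finite BH" "fs.independent BH" "fs.span BH = fs.span H" by blast
  moreover have "H \<subseteq> fs.span BH" using BH(3) fs.span_superset by blast
  ultimately obtain T where T: "finite T" "card T \<le> n * card BH" "S \<subseteq> fs.span T"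
    using span by blast
  have "fdim S \<le> ereal (card T)" by (rule fdim_le_card_spanning[OF T(1,3)])
  also have "\<dots> \<le> ereal (c * card BH)"
  proof -
    have "real (card T) \<le> real (n * card BH)" using T(2) by (simp only: of_nat_le_iff)
    also have "\<dots> \<le> c * card BH" unfolding of_nat_mult using c(1) by (intro mult_right_mono) auto
    finally show ?thesis by simp
  qed
  also have "\<dots> = ereal c * fdim H" using fdim_eq_card_basis[OF BH] by simp
  finally show ?thesis .
qed

section \<open>A Caccioppoli inequality on graphs with an intrinsic metric\<close>

lemma sum_pairs_symmetric:
  fixes E :: "('a \<times> 'a) set"
  assumes "\<And>x y. (x, y) \<in> E \<longleftrightarrow> (y, x) \<in> E"
  shows "(\<Sum>p\<in>E. g p) = (\<Sum>p\<in>E. g (prod.swap p))"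
  by (rule sum.reindex_bij_witness[where i = prod.swap and j = prod.swap]) (use assms in auto)

lemma two_point_cutoff_ineq:
  fixes a b p q W :: real
  assumes "W \<ge> 0"
  shows "W * (a - b) * (p\<^sup>2 * a - q\<^sup>2 * b) \<ge> - (W * (p - q)\<^sup>2 * (a\<^sup>2 + b\<^sup>2)) / 2"
proof -
  have "(a - b) * (p\<^sup>2 * a - q\<^sup>2 * b) = (p * a - q * b)\<^sup>2 - (p - q)\<^sup>2 * (a * b)"
    by (simp add: power2_eq_square algebra_simps)
  also have "\<dots> \<ge> - ((p - q)\<^sup>2 * (a\<^sup>2 + b\<^sup>2)) / 2"
  proof -
    have "a * b \<le> (a\<^sup>2 + b\<^sup>2) / 2" using sum_squares_bound[of a b] by simp
    from mult_left_mono[OF this zero_le_power2[of "p - q"]] show ?thesis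
      using zero_le_power2[of "p * a - q * b"] by (simp only: times_divide_eq_right)
  qed
  finally show ?thesis using mult_left_mono[OF _ assms] by (fastforce simp: algebra_simps)
qed

lemma powr_one_plus_affine_le:
  fixes s \<beta> :: real
  assumes "s \<ge> 0"
  obtains c where "c \<ge> 0" "\<And>R. R \<ge> 0 \<Longrightarrow> (1 + (2 * R + s)) powr \<beta> \<le> c * (1 + R) powr \<beta>"
proof
  show "max 1 ((2 + s) powr \<beta>) \<ge> 0" by simp
  fix R :: real assume R: "R \<ge> 0"
  show "(1 + (2 * R + s)) powr \<beta> \<le> max 1 ((2 + s) powr \<beta>) * (1 + R) powr \<beta>"
  proof (cases "\<beta> \<ge> 0")
    case True
    have "(1 + (2 * R + s)) powr \<beta> \<le> ((2 + s) * (1 + R)) powr \<beta>"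
      using True R assms by (intro powr_mono2) (auto simp: algebra_simps)
    also have "\<dots> = (2 + s) powr \<beta> * (1 + R) powr \<beta>"
      using R assms by (simp add: powr_mult)
    also have "\<dots> \<le> max 1 ((2 + s) powr \<beta>) * (1 + R) powr \<beta>"
      by (intro mult_right_mono) auto
    finally show ?thesis .
  next
    case False
    then have "(1 + (2 * R + s)) powr \<beta> \<le> (1 + R) powr \<beta>"
      using R assms by (intro powr_mono2') auto
    also have "\<dots> \<le> max 1 ((2 + s) powr \<beta>) * (1 + R) powr \<beta>"
      using mult_right_mono[OF max.cobounded1[of 1 "(2 + s) powr \<beta>"] powr_ge_zero[of "1 + R" \<beta>]]
      by simp
    finally show ?thesis .
  qed
qed

locale intrinsic_graph =
  fixes m :: "'v \<Rightarrow> real" and w :: "'v \<Rightarrow> 'v \<Rightarrow> real" and \<rho> :: "'v \<Rightarrow> 'v \<Rightarrow> real"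
    and x0 :: 'v and s :: real
  assumes weighted: "weighted_graph m w" and intrinsic: "intrinsic m w \<rho>"
    and finite_rball: "\<And>x R. R > 0 \<Longrightarrow> finite (rball \<rho> x R)"
    and jump_le: "\<And>x y. adj w x y \<Longrightarrow> \<rho> x y \<le> s" and jump_nonneg: "s \<ge> 0"
begin

abbreviation nbrs :: "'v \<Rightarrow> 'v set" where "nbrs x \<equiv> {y. adj w x y}"

abbreviation B :: "real \<Rightarrow> 'v set" where "B R \<equiv> rball \<rho> x0 R"

lemma m_pos: "m x > 0"
  using weighted unfolding weighted_graph_def by auto

lemma w_sym: "w x y = w y x"
  using weighted unfolding weighted_graph_def by auto

lemma w_nonneg: "w x y \<ge> 0"
  using weighted unfolding weighted_graph_def by auto

lemma finite_nbrs: "finite (nbrs x)"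
  using weighted unfolding weighted_graph_def by auto

lemma adj_sym: "adj w x y \<longleftrightarrow> adj w y x"
  unfolding adj_def using w_sym by auto

lemma \<rho>_nonneg: "\<rho> x y \<ge> 0"
  using intrinsic unfolding intrinsic_def pseudometric_def by auto

lemma \<rho>_sym: "\<rho> x y = \<rho> y x"
  using intrinsic unfolding intrinsic_def pseudometric_def by auto

lemma \<rho>_triangle: "\<rho> x y \<le> \<rho> x z + \<rho> z y"
  using intrinsic unfolding intrinsic_def pseudometric_def by blast

lemma intrinsic_sum_le: "(\<Sum>y\<in>nbrs x. w x y * (\<rho> x y)\<^sup>2) \<le> m x"
  using intrinsic unfolding intrinsic_def by auto

lemma finite_B: "finite (B R)"
proof (cases "R > 0")
  case False
  then have "B R \<subseteq> B 1" unfolding rball_def by auto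
  then show ?thesis using finite_rball[of 1] finite_subset by auto
qed (use finite_rball in auto)

definition neg_lap :: "('v \<Rightarrow> real) \<Rightarrow> 'v \<Rightarrow> real" where
  "neg_lap f x = (\<Sum>y\<in>nbrs x. w x y / m x * (f x - f y))"

lemma laplacian_eq_neg_lap: "laplacian m w f x = - neg_lap f x"
  unfolding laplacian_def neg_lap_def
  by (simp add: sum_negf[symmetric] minus_divide_left algebra_simps)

lemma neg_lap_add: "neg_lap (\<lambda>x. f x + g x) = (\<lambda>x. neg_lap f x + neg_lap g x)"
  unfolding neg_lap_def
  by (rule ext)
    (simp add: sum.distrib[symmetric] diff_divide_distrib[symmetric] add_divide_distrib[symmetric]
      algebra_simps)

lemma neg_lap_scale: "neg_lap (\<lambda>x. c * f x) = (\<lambda>x. c * neg_lap f x)"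
  unfolding neg_lap_def
  by (rule ext) (simp add: sum_distrib_left diff_divide_distrib[symmetric] algebra_simps)

lemma neg_lap_zero [simp]: "neg_lap (\<lambda>x. 0) = (\<lambda>x. 0)"
  unfolding neg_lap_def by simp

lemma funpow_neg_lap_add:
  "(neg_lap ^^ j) (\<lambda>x. f x + g x) = (\<lambda>x. (neg_lap ^^ j) f x + (neg_lap ^^ j) g x)"
  by (induction j) (auto simp: neg_lap_add)

lemma funpow_neg_lap_scale: "(neg_lap ^^ j) (\<lambda>x. c * f x) = (\<lambda>x. c * (neg_lap ^^ j) f x)"
  by (induction j) (auto simp: neg_lap_scale)

lemma funpow_neg_lap_zero [simp]: "(neg_lap ^^ j) (\<lambda>x. 0) = (\<lambda>x. 0)"
  by (induction j) (auto simp: neg_lap_zero)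

definition cutoff :: "real \<Rightarrow> 'v \<Rightarrow> real" where
  "cutoff R x = min 1 (max 0 (2 - \<rho> x x0 / R))"

lemma cutoff_nonneg: "cutoff R x \<ge> 0" and cutoff_le_1: "cutoff R x \<le> 1"
  unfolding cutoff_def by auto

lemma cutoff_eq_1: "R > 0 \<Longrightarrow> x \<in> B R \<Longrightarrow> cutoff R x = 1"
  unfolding cutoff_def rball_def by (auto simp: field_simps)

lemma cutoff_eq_0: "R > 0 \<Longrightarrow> 2 * R \<le> \<rho> x x0 \<Longrightarrow> cutoff R x = 0"
  unfolding cutoff_def by (auto simp: field_simps)

lemma cutoff_lipschitz:
  assumes "R > 0"
  shows "\<bar>cutoff R x - cutoff R y\<bar> \<le> \<rho> x y / R"
proof -
  have "\<bar>\<rho> x x0 - \<rho> y x0\<bar> \<le> \<rho> x y"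
    using \<rho>_triangle[of x x0 y] \<rho>_triangle[of y x0 x] \<rho>_sym[of x y] by linarith
  then have "\<bar>\<rho> x x0 / R - \<rho> y x0 / R\<bar> \<le> \<rho> x y / R"
    using assms by (simp add: diff_divide_distrib[symmetric] abs_divide divide_right_mono)
  then show ?thesis unfolding cutoff_def by (simp add: min_def max_def) linarith
qed

definition edges_in :: "'v set \<Rightarrow> ('v \<times> 'v) set" where
  "edges_in S = Sigma S (\<lambda>x. nbrs x \<inter> S)"

lemma sum_edges_in:
  "finite S \<Longrightarrow> (\<Sum>p\<in>edges_in S. g p) = (\<Sum>x\<in>S. \<Sum>y\<in>nbrs x \<inter> S. g (x, y))"
  unfolding edges_in_def by (simp add: sum.Sigma finite_nbrs)

lemma sum_edges_in_swap: "(\<Sum>p\<in>edges_in S. g p) = (\<Sum>p\<in>edges_in S. g (prod.swap p))"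
  by (rule sum_pairs_symmetric) (auto simp: edges_in_def adj_sym)

text \<open>Only edges inside \<open>B (2 R + s)\<close> contribute: the cutoff vanishes outside \<open>B (2 R)\<close>
  and edges have length at most \<open>s\<close>.\<close>
lemma cutoff_neg_lap_edge_sum:
  assumes R: "R > 0"
  shows "(\<Sum>x\<in>B (2 * R + s). m x * (cutoff R x)\<^sup>2 * u x * neg_lap u x)
    = (\<Sum>(x, y)\<in>edges_in (B (2 * R + s)). w x y * (cutoff R x)\<^sup>2 * u x * (u x - u y))"
proof -
  have "m x * (cutoff R x)\<^sup>2 * u x * neg_lap u x
      = (\<Sum>y\<in>nbrs x \<inter> B (2 * R + s). w x y * (cutoff R x)\<^sup>2 * u x * (u x - u y))" for x
  proof (cases "cutoff R x = 0")
    case False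
    then have "\<rho> x x0 < 2 * R" using cutoff_eq_0[OF R] by force
    have "nbrs x \<subseteq> B (2 * R + s)"
    proof
      fix y assume "y \<in> nbrs x"
      then have "\<rho> y x \<le> s" using jump_le \<rho>_sym by auto
      then have "\<rho> y x0 \<le> 2 * R + s" using \<rho>_triangle[of y x0 x] \<open>\<rho> x x0 < 2 * R\<close> by linarith
      then show "y \<in> B (2 * R + s)" unfolding rball_def by simp
    qed
    moreover have "m x * (cutoff R x)\<^sup>2 * u x * neg_lap u x
        = (\<Sum>y\<in>nbrs x. w x y * (cutoff R x)\<^sup>2 * u x * (u x - u y))"
      unfolding neg_lap_def sum_distrib_left using m_pos[of x]
      by (intro sum.cong) (auto simp: field_simps)
    ultimately show ?thesis by (simp add: Int_absorb2)
  qed simp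
  then show ?thesis by (simp add: sum_edges_in finite_B)
qed

lemma edge_sum_cutoff_gradient_le:
  assumes R: "R > 0" and S: "finite S"
  shows "(\<Sum>(x, y)\<in>edges_in S. w x y * (cutoff R x - cutoff R y)\<^sup>2 * (u x)\<^sup>2)
    \<le> (\<Sum>x\<in>S. m x * (u x)\<^sup>2) / R\<^sup>2"
proof -
  have "(\<Sum>y\<in>nbrs x \<inter> S. w x y * (cutoff R x - cutoff R y)\<^sup>2 * (u x)\<^sup>2) \<le> m x * (u x)\<^sup>2 / R\<^sup>2"
    for x
  proof -
    have "(\<Sum>y\<in>nbrs x \<inter> S. w x y * (cutoff R x - cutoff R y)\<^sup>2 * (u x)\<^sup>2)
        \<le> (\<Sum>y\<in>nbrs x \<inter> S. w x y * (\<rho> x y)\<^sup>2 * ((u x)\<^sup>2 / R\<^sup>2))"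
    proof (rule sum_mono)
      fix y
      have "\<bar>cutoff R x - cutoff R y\<bar>\<^sup>2 \<le> (\<rho> x y / R)\<^sup>2"
        using cutoff_lipschitz[OF R, of x y] by (intro power_mono) auto
      then have "w x y * (cutoff R x - cutoff R y)\<^sup>2 * (u x)\<^sup>2 \<le> w x y * (\<rho> x y / R)\<^sup>2 * (u x)\<^sup>2"
        by (intro mult_right_mono mult_left_mono w_nonneg) auto
      then show "w x y * (cutoff R x - cutoff R y)\<^sup>2 * (u x)\<^sup>2 \<le> w x y * (\<rho> x y)\<^sup>2 * ((u x)\<^sup>2 / R\<^sup>2)"
        by (simp add: power_divide)
    qed
    also have "\<dots> \<le> (\<Sum>y\<in>nbrs x. w x y * (\<rho> x y)\<^sup>2 * ((u x)\<^sup>2 / R\<^sup>2))"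
      by (intro sum_mono2 finite_nbrs)
        (auto intro!: divide_nonneg_nonneg mult_nonneg_nonneg w_nonneg)
    also have "\<dots> = (\<Sum>y\<in>nbrs x. w x y * (\<rho> x y)\<^sup>2) * ((u x)\<^sup>2 / R\<^sup>2)"
      by (simp add: sum_distrib_right sum_divide_distrib mult.assoc)
    also have "\<dots> \<le> m x * ((u x)\<^sup>2 / R\<^sup>2)"
      by (intro mult_right_mono intrinsic_sum_le) auto
    finally show ?thesis by simp
  qed
  then have "(\<Sum>x\<in>S. \<Sum>y\<in>nbrs x \<inter> S. w x y * (cutoff R x - cutoff R y)\<^sup>2 * (u x)\<^sup>2)
      \<le> (\<Sum>x\<in>S. m x * (u x)\<^sup>2 / R\<^sup>2)"
    by (rule sum_mono)
  then show ?thesis by (simp add: sum_edges_in[OF S] split_def sum_divide_distrib)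
qed

lemma cutoff_cross_term_ge:
  assumes R: "R > 0"
  shows "(\<Sum>x\<in>B (2 * R + s). m x * (cutoff R x)\<^sup>2 * u x * neg_lap u x)
    \<ge> - (\<Sum>x\<in>B (2 * R + s). m x * (u x)\<^sup>2) / (2 * R\<^sup>2)"
proof -
  define E where "E = edges_in (B (2 * R + s))"
  define F where "F = (\<lambda>(x, y). w x y * (cutoff R x)\<^sup>2 * u x * (u x - u y))"
  define G where "G = (\<lambda>(x, y). w x y * (cutoff R x - cutoff R y)\<^sup>2 * (u x)\<^sup>2)"
  have "2 * (\<Sum>p\<in>E. F p) = (\<Sum>p\<in>E. F p + F (prod.swap p))"
    using sum_edges_in_swap[where g = F] by (simp add: E_def sum.distrib)
  also have "\<dots> \<ge> (\<Sum>p\<in>E. - (G p + G (prod.swap p)) / 2)"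
  proof (rule sum_mono)
    fix p :: "'v \<times> 'v"
    obtain x y where p: "p = (x, y)" by fastforce
    have "F p + F (prod.swap p)
        = w x y * (u x - u y) * ((cutoff R x)\<^sup>2 * u x - (cutoff R y)\<^sup>2 * u y)"
      unfolding F_def p using w_sym[of x y] by (simp add: algebra_simps)
    also have "\<dots> \<ge> - (w x y * (cutoff R x - cutoff R y)\<^sup>2 * ((u x)\<^sup>2 + (u y)\<^sup>2)) / 2"
      by (rule two_point_cutoff_ineq[OF w_nonneg])
    finally show "- (G p + G (prod.swap p)) / 2 \<le> F p + F (prod.swap p)"
      unfolding G_def p using w_sym[of x y]
      by (simp add: algebra_simps power2_commute[of "cutoff R x"])
  qed
  also have "(\<Sum>p\<in>E. - (G p + G (prod.swap p)) / 2)
      = - ((\<Sum>p\<in>E. G p) + (\<Sum>p\<in>E. G (prod.swap p))) / 2"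
    by (simp add: sum_negf sum.distrib sum_subtractf sum_divide_distrib[symmetric])
  also have "\<dots> = - (\<Sum>p\<in>E. G p)"
    using sum_edges_in_swap[where g = G] by (simp add: E_def)
  finally have "(\<Sum>p\<in>E. F p) \<ge> - (\<Sum>p\<in>E. G p) / 2" by simp
  moreover have "(\<Sum>p\<in>E. G p) \<le> (\<Sum>x\<in>B (2 * R + s). m x * (u x)\<^sup>2) / R\<^sup>2"
    unfolding E_def G_def using edge_sum_cutoff_gradient_le[OF R finite_B] .
  ultimately show ?thesis
    unfolding cutoff_neg_lap_edge_sum[OF R] E_def[symmetric] F_def[symmetric]
    by (simp add: field_simps)
qed

definition ball_mass :: "real \<Rightarrow> ('v \<Rightarrow> real) \<Rightarrow> real" where
  "ball_mass R f = (\<Sum>x\<in>B R. m x * (f x)\<^sup>2)"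

lemma ball_mass_nonneg: "ball_mass R f \<ge> 0"
  unfolding ball_mass_def by (intro sum_nonneg mult_nonneg_nonneg) (auto intro: less_imp_le m_pos)

lemma caccioppoli:
  assumes R: "R > 0"
  shows "ball_mass R (neg_lap u)
    \<le> (\<Sum>x\<in>B (2 * R + s). m x * (cutoff R x)\<^sup>2 * (u x + neg_lap u x)\<^sup>2)
      - (\<Sum>x\<in>B (2 * R + s). m x * (cutoff R x)\<^sup>2 * (u x)\<^sup>2) + ball_mass (2 * R + s) u / R\<^sup>2"
proof -
  define S where "S = B (2 * R + s)"
  have "B R \<subseteq> S" unfolding S_def rball_def using R jump_nonneg by auto
  have "ball_mass R (neg_lap u) = (\<Sum>x\<in>B R. m x * (cutoff R x)\<^sup>2 * (neg_lap u x)\<^sup>2)"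
    unfolding ball_mass_def using cutoff_eq_1[OF R] by simp
  also have "\<dots> \<le> (\<Sum>x\<in>S. m x * (cutoff R x)\<^sup>2 * (neg_lap u x)\<^sup>2)"
    using \<open>B R \<subseteq> S\<close> by (intro sum_mono2) (auto simp: S_def finite_B less_imp_le[OF m_pos])
  also have "\<dots> = (\<Sum>x\<in>S. m x * (cutoff R x)\<^sup>2 * (u x + neg_lap u x)\<^sup>2)
      - (\<Sum>x\<in>S. m x * (cutoff R x)\<^sup>2 * (u x)\<^sup>2)
      - 2 * (\<Sum>x\<in>S. m x * (cutoff R x)\<^sup>2 * u x * neg_lap u x)"
    by (simp add: sum_subtractf[symmetric] sum_distrib_left power2_eq_square algebra_simps)
  finally show ?thesis
    using cutoff_cross_term_ge[OF R, of u] unfolding S_def ball_mass_def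
    by (simp add: field_simps)
qed

definition heat_seq :: "(nat \<Rightarrow> 'v \<Rightarrow> real) \<Rightarrow> bool" where
  "heat_seq U \<longleftrightarrow> (\<forall>n. U (Suc n) = (\<lambda>x. U n x + neg_lap (U n) x))"

lemma heat_seq_add: "heat_seq U \<Longrightarrow> heat_seq V \<Longrightarrow> heat_seq (\<lambda>n x. U n x + V n x)"
  unfolding heat_seq_def by (simp add: neg_lap_add fun_eq_iff)

lemma heat_seq_scale: "heat_seq U \<Longrightarrow> heat_seq (\<lambda>n x. c * U n x)"
  unfolding heat_seq_def by (simp add: neg_lap_scale fun_eq_iff algebra_simps)

lemma heat_seq_funpow_neg_lap: "heat_seq U \<Longrightarrow> heat_seq (\<lambda>n. (neg_lap ^^ j) (U n))"
  unfolding heat_seq_def by (simp add: funpow_neg_lap_add funpow_swap1)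

lemma sum_ball_mass_neg_lap_le:
  assumes U: "heat_seq U" and R: "R > 0"
  shows "(\<Sum>n<M. ball_mass R (neg_lap (U n)))
    \<le> ball_mass (2 * R + s) (U M) + (\<Sum>n<M. ball_mass (2 * R + s) (U n)) / R\<^sup>2"
proof -
  define Sp where "Sp n = (\<Sum>x\<in>B (2 * R + s). m x * (cutoff R x)\<^sup>2 * (U n x)\<^sup>2)" for n
  have "(\<Sum>n<M. ball_mass R (neg_lap (U n)))
      \<le> (\<Sum>n<M. Sp (Suc n) - Sp n + ball_mass (2 * R + s) (U n) / R\<^sup>2)"
    using caccioppoli[OF R] U by (intro sum_mono) (simp add: heat_seq_def Sp_def)
  also have "\<dots> = Sp M - Sp 0 + (\<Sum>n<M. ball_mass (2 * R + s) (U n)) / R\<^sup>2"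
    by (simp add: sum.distrib sum_lessThan_telescope sum_divide_distrib)
  moreover have "Sp M \<le> ball_mass (2 * R + s) (U M)"
    unfolding Sp_def ball_mass_def
  proof (rule sum_mono)
    fix x
    have "(cutoff R x)\<^sup>2 \<le> 1" using cutoff_nonneg cutoff_le_1 by (simp add: power_le_one)
    then show "m x * (cutoff R x)\<^sup>2 * (U M x)\<^sup>2 \<le> m x * (U M x)\<^sup>2"
      using mult_right_mono[of "(cutoff R x)\<^sup>2" 1 "m x * (U M x)\<^sup>2"] m_pos[of x]
      by (simp add: algebra_simps)
  qed
  moreover have "Sp 0 \<ge> 0"
    unfolding Sp_def by (intro sum_nonneg mult_nonneg_nonneg) (auto intro: less_imp_le m_pos)
  ultimately show ?thesis by linarith
qed

definition L2_mass :: "(nat \<Rightarrow> 'v \<Rightarrow> real) \<Rightarrow> real \<Rightarrow> nat \<Rightarrow> real" where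
  "L2_mass U R N = (\<Sum>n<N. ball_mass R (U n))"

lemma L2_mass_nonneg: "L2_mass U R N \<ge> 0"
  unfolding L2_mass_def by (intro sum_nonneg ball_mass_nonneg)

lemma L2_mass_mono: "N \<le> N' \<Longrightarrow> L2_mass U R N \<le> L2_mass U R N'"
  unfolding L2_mass_def by (intro sum_mono2) (auto intro: ball_mass_nonneg)

text \<open>Averaging the previous bound over the final times \<open>M \<in> [N, 2N)\<close>.\<close>
lemma L2_mass_neg_lap_le:
  assumes U: "heat_seq U" and R: "R > 0" and N: "N \<ge> 1"
  shows "L2_mass (\<lambda>n. neg_lap (U n)) R N \<le> (1 / real N + 1 / R\<^sup>2) * L2_mass U (2 * R + s) (2 * N)"
proof -
  define X where "X = L2_mass U (2 * R + s) (2 * N)"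
  have "L2_mass (\<lambda>n. neg_lap (U n)) R N \<le> ball_mass (2 * R + s) (U M) + X / R\<^sup>2"
    if M: "M \<in> {N..<2 * N}" for M
  proof -
    have "L2_mass (\<lambda>n. neg_lap (U n)) R N \<le> (\<Sum>n<M. ball_mass R (neg_lap (U n)))"
      unfolding L2_mass_def using M by (intro sum_mono2) (auto intro: ball_mass_nonneg)
    also have "\<dots> \<le> ball_mass (2 * R + s) (U M) + (\<Sum>n<M. ball_mass (2 * R + s) (U n)) / R\<^sup>2"
      by (rule sum_ball_mass_neg_lap_le[OF U R])
    also have "(\<Sum>n<M. ball_mass (2 * R + s) (U n)) \<le> X"
      unfolding X_def L2_mass_def using M by (intro sum_mono2) (auto intro: ball_mass_nonneg)
    finally show ?thesis using R by (simp add: divide_right_mono)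
  qed
  then have "real N * L2_mass (\<lambda>n. neg_lap (U n)) R N
      \<le> (\<Sum>M\<in>{N..<2 * N}. ball_mass (2 * R + s) (U M) + X / R\<^sup>2)"
    using sum_mono[of "{N..<2 * N}" "\<lambda>_. L2_mass (\<lambda>n. neg_lap (U n)) R N"] by simp
  also have "\<dots> \<le> X + real N * (X / R\<^sup>2)"
  proof -
    have "(\<Sum>M\<in>{N..<2 * N}. ball_mass (2 * R + s) (U M)) \<le> X"
      unfolding X_def L2_mass_def by (intro sum_mono2) (auto intro: ball_mass_nonneg)
    then show ?thesis by (simp add: sum.distrib)
  qed
  finally show ?thesis using N by (simp add: X_def field_simps)
qed

definition L2_growth :: "(nat \<Rightarrow> 'v \<Rightarrow> real) \<Rightarrow> real \<Rightarrow> bool" where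
  "L2_growth U \<beta> \<longleftrightarrow> (\<exists>K. \<forall>R\<ge>1. \<forall>N. real N \<le> R\<^sup>2 \<longrightarrow> L2_mass U R N \<le> K * (1 + R) powr \<beta>)"

lemma L2_growthE:
  assumes "L2_growth U \<beta>"
  obtains K where "K \<ge> 0" "\<And>R N. R \<ge> 1 \<Longrightarrow> real N \<le> R\<^sup>2 \<Longrightarrow> L2_mass U R N \<le> K * (1 + R) powr \<beta>"
proof -
  obtain K where K: "\<And>R N. R \<ge> 1 \<Longrightarrow> real N \<le> R\<^sup>2 \<Longrightarrow> L2_mass U R N \<le> K * (1 + R) powr \<beta>"
    using assms unfolding L2_growth_def by blast
  show ?thesis
  proof
    show "max K 0 \<ge> 0" by simp
    show "L2_mass U R N \<le> max K 0 * (1 + R) powr \<beta>" if "R \<ge> 1" "real N \<le> R\<^sup>2" for R N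
      using K[OF that] mult_right_mono[OF max.cobounded1[of K 0] powr_ge_zero[of "1 + R" \<beta>]]
      by linarith
  qed
qed

lemma L2_mass_neg_lap_le_sq:
  assumes U: "heat_seq U" and R: "R \<ge> 1" and N: "real N \<le> R\<^sup>2"
  shows "L2_mass (\<lambda>n. neg_lap (U n)) R N \<le> 3 / R\<^sup>2 * L2_mass U (2 * R + s) (2 * nat \<lfloor>R\<^sup>2\<rfloor>)"
proof -
  define M where "M = nat \<lfloor>R\<^sup>2\<rfloor>"
  have M: "1 \<le> M" "R\<^sup>2 \<le> 2 * real M"
    unfolding M_def using nat_floor_bounds[of "R\<^sup>2"] R by (auto simp: one_le_power)
  have "L2_mass (\<lambda>n. neg_lap (U n)) R N \<le> L2_mass (\<lambda>n. neg_lap (U n)) R M"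
    unfolding M_def using N by (intro L2_mass_mono le_nat_floor)
  also have "\<dots> \<le> (1 / real M + 1 / R\<^sup>2) * L2_mass U (2 * R + s) (2 * M)"
    using R by (intro L2_mass_neg_lap_le[OF U _ M(1)]) simp
  also have "\<dots> \<le> 3 / R\<^sup>2 * L2_mass U (2 * R + s) (2 * M)"
  proof (rule mult_right_mono)
    have "1 / real M \<le> 2 / R\<^sup>2" using M R by (simp add: divide_simps)
    then show "1 / real M + 1 / R\<^sup>2 \<le> 3 / R\<^sup>2" by simp
  qed (rule L2_mass_nonneg)
  finally show ?thesis unfolding M_def .
qed

lemma L2_growth_neg_lap:
  assumes U: "heat_seq U" and "L2_growth U \<beta>"
  shows "L2_growth (\<lambda>n. neg_lap (U n)) (\<beta> - 2)"
proof -
  obtain K where K: "K \<ge> 0"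
    "\<And>R N. R \<ge> 1 \<Longrightarrow> real N \<le> R\<^sup>2 \<Longrightarrow> L2_mass U R N \<le> K * (1 + R) powr \<beta>"
    using L2_growthE[OF assms(2)] by blast
  obtain c where c: "c \<ge> 0" "\<And>R. R \<ge> 0 \<Longrightarrow> (1 + (2 * R + s)) powr \<beta> \<le> c * (1 + R) powr \<beta>"
    using powr_one_plus_affine_le[OF jump_nonneg] by blast
  have "L2_mass (\<lambda>n. neg_lap (U n)) R N \<le> (12 * K * c) * (1 + R) powr (\<beta> - 2)"
    if R: "R \<ge> 1" and N: "real N \<le> R\<^sup>2" for R N
  proof -
    have "(2 * R + s)\<^sup>2 = 4 * R\<^sup>2 + 4 * (R * s) + s * s"
      by (simp add: power2_eq_square algebra_simps)
    moreover have "0 \<le> R * s" "0 \<le> s * s" using R jump_nonneg by auto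
    moreover have "real (nat \<lfloor>R\<^sup>2\<rfloor>) \<le> R\<^sup>2"
      using nat_floor_bounds(2)[of "R\<^sup>2"] R by (simp add: one_le_power)
    ultimately have "real (2 * nat \<lfloor>R\<^sup>2\<rfloor>) \<le> (2 * R + s)\<^sup>2"
      unfolding of_nat_mult of_nat_numeral by linarith
    then have "L2_mass U (2 * R + s) (2 * nat \<lfloor>R\<^sup>2\<rfloor>) \<le> K * (1 + (2 * R + s)) powr \<beta>"
      using K(2) R jump_nonneg by simp
    also have "\<dots> \<le> K * (c * (1 + R) powr \<beta>)"
      using c(2)[of R] K(1) R by (intro mult_left_mono) auto
    finally have "3 / R\<^sup>2 * L2_mass U (2 * R + s) (2 * nat \<lfloor>R\<^sup>2\<rfloor>)
        \<le> 3 / R\<^sup>2 * (K * (c * (1 + R) powr \<beta>))"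
      by (intro mult_left_mono) auto
    also have "\<dots> \<le> 12 / (1 + R)\<^sup>2 * (K * (c * (1 + R) powr \<beta>))"
    proof (rule mult_right_mono)
      have "(1 + R)\<^sup>2 \<le> 4 * R\<^sup>2"
        using power_mono[of "1 + R" "2 * R" 2] R by (simp add: power_mult_distrib)
      then show "3 / R\<^sup>2 \<le> 12 / (1 + R)\<^sup>2" using R by (simp add: divide_simps)
    qed (use K(1) c(1) in simp)
    also have "\<dots> = (12 * K * c) * (1 + R) powr (\<beta> - 2)"
      using R by (simp add: powr_diff)
    finally show ?thesis using L2_mass_neg_lap_le_sq[OF U R N] by linarith
  qed
  then show ?thesis unfolding L2_growth_def by blast
qed

section \<open>Ancient solutions of polynomial growth\<close>

lemma L2_growth_funpow_neg_lap:
  assumes "heat_seq U" and "L2_growth U \<beta>"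
  shows "L2_growth (\<lambda>n. (neg_lap ^^ j) (U n)) (\<beta> - 2 * real j)"
proof (induction j)
  case (Suc j)
  have "L2_growth (\<lambda>n. neg_lap ((neg_lap ^^ j) (U n))) (\<beta> - 2 * real j - 2)"
    by (rule L2_growth_neg_lap[OF heat_seq_funpow_neg_lap[OF assms(1)] Suc.IH])
  then show ?case by (simp add: algebra_simps)
qed (use assms in simp)

lemma L2_growth_neg_imp_zero:
  assumes "L2_growth W \<gamma>" and "\<gamma> < 0"
  shows "W n x = 0"
proof -
  obtain K where K: "K \<ge> 0"
    "\<And>R N. R \<ge> 1 \<Longrightarrow> real N \<le> R\<^sup>2 \<Longrightarrow> L2_mass W R N \<le> K * (1 + R) powr \<gamma>"
    using L2_growthE[OF assms(1)] by blast
  have "m x * (W n x)\<^sup>2 = 0"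
  proof (rule eq_0_if_abs_le_powr_neg)
    show "- \<gamma> > 0" using assms(2) by simp
    fix R assume R: "R \<ge> max 1 (max (\<rho> x x0) (real n + 1))"
    then have "real (Suc n) \<le> R\<^sup>2"
      using order_trans[of _ R "R\<^sup>2"] by (force simp: power2_eq_square)
    have "x \<in> B R" using R by (simp add: rball_def)
    then have "m x * (W n x)\<^sup>2 \<le> ball_mass R (W n)"
      unfolding ball_mass_def by (intro member_le_sum) (auto simp: finite_B less_imp_le[OF m_pos])
    also have "\<dots> \<le> L2_mass W R (Suc n)"
      unfolding L2_mass_def by (intro member_le_sum) (auto intro: ball_mass_nonneg)
    also have "\<dots> \<le> K * (1 + R) powr \<gamma>"
      using K(2) R \<open>real (Suc n) \<le> R\<^sup>2\<close> by simp
    also have "\<dots> \<le> K * R powr \<gamma>"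
      using K(1) R assms(2) by (intro mult_left_mono powr_mono2') auto
    finally show "\<bar>m x * (W n x)\<^sup>2\<bar> \<le> K * R powr - (- \<gamma>)"
      using m_pos[of x] by simp
  qed
  then show ?thesis using m_pos[of x] by simp
qed

lemma L2_growth_if_bounded:
  assumes bound: "\<And>R x n. R > 0 \<Longrightarrow> x \<in> B R \<Longrightarrow> real n \<le> R\<^sup>2 \<Longrightarrow> \<bar>U n x\<bar> \<le> C * (1 + R) powr p"
    and vol: "\<And>R. R > 0 \<Longrightarrow> (\<Sum>y\<in>B R. m y) \<le> CV * (1 + R) powr a"
    and C: "C \<ge> 0"
  shows "L2_growth U (2 * p + a + 2)"
proof -
  have "L2_mass U R N \<le> (\<bar>CV\<bar> * C\<^sup>2) * (1 + R) powr (2 * p + a + 2)"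
    if R: "R \<ge> 1" and N: "real N \<le> R\<^sup>2" for R N
  proof -
    define M where "M = C * (1 + R) powr p"
    have "(U n x)\<^sup>2 \<le> M\<^sup>2" if "n < N" "x \<in> B R" for n x
    proof -
      have "\<bar>U n x\<bar> \<le> M" unfolding M_def using bound[of R x n] R N that by auto
      then show ?thesis using abs_le_square_iff by fastforce
    qed
    then have "L2_mass U R N \<le> (\<Sum>n<N. \<Sum>x\<in>B R. m x * M\<^sup>2)"
      unfolding L2_mass_def ball_mass_def
      by (intro sum_mono mult_left_mono) (auto intro: less_imp_le m_pos)
    also have "\<dots> = real N * (\<Sum>x\<in>B R. m x) * M\<^sup>2" by (simp add: sum_distrib_right)
    also have "\<dots> \<le> (1 + R)\<^sup>2 * (\<bar>CV\<bar> * (1 + R) powr a) * M\<^sup>2"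
    proof (intro mult_right_mono mult_mono)
      show "real N \<le> (1 + R)\<^sup>2" using N R by (simp add: power2_eq_square algebra_simps)
      show "(\<Sum>x\<in>B R. m x) \<le> \<bar>CV\<bar> * (1 + R) powr a"
        using order_trans[OF vol[of R] mult_right_mono[OF abs_ge_self[of CV] powr_ge_zero]] R
        by simp
      show "0 \<le> (\<Sum>x\<in>B R. m x)" by (intro sum_nonneg) (simp add: less_imp_le[OF m_pos])
    qed simp_all
    also have "\<dots> = (\<bar>CV\<bar> * C\<^sup>2) * ((1 + R) powr 2 * (1 + R) powr a * ((1 + R) powr p)\<^sup>2)"
      unfolding M_def using R by (simp add: power2_eq_square algebra_simps)
    also have "\<dots> = (\<bar>CV\<bar> * C\<^sup>2) * (1 + R) powr (2 * p + a + 2)"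
      by (simp add: power2_eq_square powr_add[symmetric] algebra_simps)
    finally show ?thesis .
  qed
  then show ?thesis unfolding L2_growth_def by blast
qed

lemma funpow_neg_lap_eventually_zero:
  assumes "heat_seq U"
    and "\<And>R x n. R > 0 \<Longrightarrow> x \<in> B R \<Longrightarrow> real n \<le> R\<^sup>2 \<Longrightarrow> \<bar>U n x\<bar> \<le> C * (1 + R) powr p"
    and "\<And>R. R > 0 \<Longrightarrow> (\<Sum>y\<in>B R. m y) \<le> CV * (1 + R) powr a"
    and "C \<ge> 0"
  obtains J where "\<And>n x. (neg_lap ^^ J) (U n) x = 0"
proof
  define J where "J = nat \<lceil>2 * p + a + 2\<rceil> + 1"
  have "2 * p + a + 2 \<le> real (nat \<lceil>2 * p + a + 2\<rceil>)" by (rule real_nat_ceiling_ge)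
  then have "2 * p + a + 2 - 2 * real J < 0" unfolding J_def by simp
  then show "(neg_lap ^^ J) (U n) x = 0" for n x
    using L2_growth_neg_imp_zero
      L2_growth_funpow_neg_lap[OF assms(1) L2_growth_if_bounded[OF assms(2-4)]]
    by blast
qed

lemma funpow_neg_lap_heat_seq_Suc:
  "heat_seq U \<Longrightarrow>
    (neg_lap ^^ i) (U (Suc n)) = (\<lambda>x. (neg_lap ^^ i) (U n) x + (neg_lap ^^ Suc i) (U n) x)"
  unfolding heat_seq_def by (simp add: funpow_neg_lap_add funpow_swap1)

lemma funpow_fwd_diff_heat_seq:
  assumes "heat_seq U"
  shows "(fwd_diff 1 ^^ i) (\<lambda>n. U n x) = (\<lambda>n. (neg_lap ^^ i) (U n) x)"
  by (induction i) (auto simp: fwd_diff_def funpow_neg_lap_heat_seq_Suc[OF assms])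

text \<open>In time, \<open>(-\<Delta>)\<^sup>j U\<close> is the \<open>j\<close>-th difference of \<open>U\<close>; if it is constant, the growth bound
  of order \<open>p < 2 j\<close> forces it to vanish.\<close>
lemma funpow_neg_lap_vanishes_step:
  assumes U: "heat_seq U" and C: "C \<ge> 0" and p: "0 \<le> p" "p < 2 * real j"
    and bound: "\<And>R x n. R > 0 \<Longrightarrow> x \<in> B R \<Longrightarrow> real n \<le> R\<^sup>2 \<Longrightarrow> \<bar>U n x\<bar> \<le> C * (1 + R) powr p"
    and zero: "\<And>n x. (neg_lap ^^ Suc j) (U n) x = 0"
  shows "(neg_lap ^^ j) (U n) x = 0"
proof -
  have const: "(neg_lap ^^ j) (U n) x = (neg_lap ^^ j) (U 0) x" for n
    by (induction n) (simp_all add: funpow_neg_lap_heat_seq_Suc[OF U] zero del: funpow.simps)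
  have "(neg_lap ^^ j) (U 0) x = 0"
  proof (rule funpow_fwd_diff_const_eq_0[OF _ p C])
    show "(fwd_diff 1 ^^ j) (\<lambda>n. U n x) n = (neg_lap ^^ j) (U 0) x" for n
      unfolding funpow_fwd_diff_heat_seq[OF U] using const by simp
    show "\<bar>U n x\<bar> \<le> C * (1 + R) powr p" if "R \<ge> max 1 (\<rho> x x0)" "real n \<le> R\<^sup>2" for R n
      using bound[of R x n] that by (auto simp: rball_def)
  qed
  then show ?thesis using const by simp
qed

lemma funpow_neg_lap_vanishes:
  assumes U: "heat_seq U" and C: "C \<ge> 0" and p: "0 \<le> p" "p < 2 * real (Suc K)"
    and bound: "\<And>R x n. R > 0 \<Longrightarrow> x \<in> B R \<Longrightarrow> real n \<le> R\<^sup>2 \<Longrightarrow> \<bar>U n x\<bar> \<le> C * (1 + R) powr p"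
    and "\<And>n x. (neg_lap ^^ J) (U n) x = 0"
  shows "(neg_lap ^^ Suc K) (U n) x = 0"
  using assms(6)
proof (induction J arbitrary: n x)
  case 0
  then have "U n = (\<lambda>x. 0)" by auto
  then show ?case by (simp del: funpow.simps)
next
  case (Suc J)
  show ?case
  proof (cases "Suc J \<le> Suc K")
    case True
    then obtain d where "Suc K = d + Suc J" using le_add_diff_inverse2 by metis
    then have "(neg_lap ^^ Suc K) (U n) = (neg_lap ^^ d) ((neg_lap ^^ Suc J) (U n))"
      by (simp only: funpow_add o_apply)
    moreover have "(neg_lap ^^ Suc J) (U n) = (\<lambda>x. 0)" using Suc.prems by blast
    ultimately show ?thesis by (simp del: funpow.simps)
  next
    case False
    then have "p < 2 * real J" using p by simp
    then show ?thesis
      using Suc funpow_neg_lap_vanishes_step[OF U C p(1) _ bound] by blast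
  qed
qed

definition backward_seq :: "('v \<times> int \<Rightarrow> real) \<Rightarrow> nat \<Rightarrow> 'v \<Rightarrow> real" where
  "backward_seq v n x = v (x, - int n)"

definition growth_bound :: "('v \<times> int \<Rightarrow> real) \<Rightarrow> real \<Rightarrow> real \<Rightarrow> bool" where
  "growth_bound v C p \<longleftrightarrow> (\<forall>R>0. \<forall>x\<in>B R. \<forall>t::int. - (R\<^sup>2) \<le> real_of_int t \<and> t \<le> 0 \<longrightarrow>
      \<bar>v (x, t)\<bar> \<le> C * (1 + R) powr p)"

lemma growth_bound_backward_seq:
  assumes "growth_bound v C p" "R > 0" "x \<in> B R" "real n \<le> R\<^sup>2"
  shows "\<bar>backward_seq v n x\<bar> \<le> C * (1 + R) powr p"
  using assms unfolding growth_bound_def backward_seq_def by force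

lemma growth_bound_recenter:
  assumes p: "p \<ge> 0"
    and bound: "\<forall>R>0. \<forall>x\<in>rball \<rho> x1 R. \<forall>t::int. - (R\<^sup>2) \<le> real_of_int t \<and> t \<le> 0 \<longrightarrow>
      \<bar>v (x, t)\<bar> \<le> C1 * (1 + R) powr p"
  shows "\<exists>C\<ge>0. growth_bound v C p"
proof (intro exI conjI)
  define c where "c = \<rho> x0 x1"
  have c: "c \<ge> 0" unfolding c_def by (rule \<rho>_nonneg)
  show "\<bar>C1\<bar> * (1 + c) powr p \<ge> 0" by simp
  show "growth_bound v (\<bar>C1\<bar> * (1 + c) powr p) p"
    unfolding growth_bound_def
  proof (intro allI impI ballI)
    fix R x and t :: int
    assume R: "R > 0" and x: "x \<in> B R" and t: "- (R\<^sup>2) \<le> real_of_int t \<and> t \<le> 0"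
    have "x \<in> rball \<rho> x1 (R + c)"
      using x \<rho>_triangle[of x x1 x0] unfolding rball_def c_def by simp
    moreover have "- ((R + c)\<^sup>2) \<le> real_of_int t"
      using t power_mono[of R "R + c" 2] R c by linarith
    ultimately have "\<bar>v (x, t)\<bar> \<le> C1 * (1 + (R + c)) powr p" using bound R c t by auto
    also have "\<dots> \<le> \<bar>C1\<bar> * ((1 + c) * (1 + R)) powr p"
      using p R c by (intro mult_mono powr_mono2) (auto simp: algebra_simps)
    also have "\<dots> = \<bar>C1\<bar> * (1 + c) powr p * (1 + R) powr p"
      using R c by (simp add: powr_mult)
    finally show "\<bar>v (x, t)\<bar> \<le> \<bar>C1\<bar> * (1 + c) powr p * (1 + R) powr p" .
  qed
qed

lemma heat_seq_backward_seq:
  assumes "v \<in> ancient_poly m w \<rho> p"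
  shows "heat_seq (backward_seq v)"
  unfolding heat_seq_def
proof (intro allI ext)
  fix n x
  have Suc_n: "- int (Suc n) = - int n - 1" by simp
  have "v (x, - int n) - v (x, - int n - 1) = - neg_lap (\<lambda>y. v (y, - int n)) x"
    using assms unfolding ancient_poly_def laplacian_eq_neg_lap by simp
  moreover have "backward_seq v (Suc n) x = v (x, - int n - 1)"
    unfolding backward_seq_def Suc_n by (rule refl)
  moreover have "backward_seq v n = (\<lambda>y. v (y, - int n))"
    by (simp add: backward_seq_def fun_eq_iff)
  ultimately show "backward_seq v (Suc n) x = backward_seq v n x + neg_lap (backward_seq v n) x"
    by simp
qed

lemma ancient_poly_iff:
  assumes p: "p \<ge> 0"
  shows "v \<in> ancient_poly m w \<rho> p \<longleftrightarrow>
    (\<forall>x t. 0 < t \<longrightarrow> v (x, t) = 0) \<and> heat_seq (backward_seq v) \<and> (\<exists>C\<ge>0. growth_bound v C p)"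
proof
  assume v: "v \<in> ancient_poly m w \<rho> p"
  then show "(\<forall>x t. 0 < t \<longrightarrow> v (x, t) = 0) \<and> heat_seq (backward_seq v) \<and> (\<exists>C\<ge>0. growth_bound v C p)"
    using heat_seq_backward_seq growth_bound_recenter[OF p] unfolding ancient_poly_def by blast
next
  assume v: "(\<forall>x t. 0 < t \<longrightarrow> v (x, t) = 0) \<and> heat_seq (backward_seq v) \<and> (\<exists>C\<ge>0. growth_bound v C p)"
  have "v (x, t) - v (x, t - 1) = laplacian m w (\<lambda>y. v (y, t)) x" if t: "t \<le> 0" for x t
  proof -
    obtain n where n: "t = - int n" using nonpos_int_cases[OF t] by blast
    have "backward_seq v (Suc n) x = backward_seq v n x + neg_lap (backward_seq v n) x"
      using v unfolding heat_seq_def by metis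
    moreover have "backward_seq v (Suc n) x = v (x, t - 1)"
    proof -
      have Suc_n: "- int (Suc n) = - int n - 1" by simp
      show ?thesis unfolding backward_seq_def n Suc_n by (rule refl)
    qed
    moreover have "backward_seq v n = (\<lambda>y. v (y, t))"
      by (simp add: backward_seq_def fun_eq_iff n)
    ultimately show ?thesis unfolding laplacian_eq_neg_lap by simp
  qed
  then show "v \<in> ancient_poly m w \<rho> p"
    using v unfolding ancient_poly_def growth_bound_def by blast
qed

lemma subspace_ancient_poly:
  assumes p: "p \<ge> 0"
  shows "fs.subspace (ancient_poly m w \<rho> p)"
proof (rule fs.subspaceI)
  have "heat_seq (\<lambda>n x. 0)" unfolding heat_seq_def by simp
  moreover have "growth_bound 0 0 p" unfolding growth_bound_def by simp
  ultimately show "0 \<in> ancient_poly m w \<rho> p"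
    unfolding ancient_poly_iff[OF p] backward_seq_def by auto
next
  fix v1 v2 assume "v1 \<in> ancient_poly m w \<rho> p" "v2 \<in> ancient_poly m w \<rho> p"
  then obtain C1 C2 where
    "\<forall>x t. 0 < t \<longrightarrow> v1 (x, t) = 0" "heat_seq (backward_seq v1)" "growth_bound v1 C1 p" "C1 \<ge> 0"
    "\<forall>x t. 0 < t \<longrightarrow> v2 (x, t) = 0" "heat_seq (backward_seq v2)" "growth_bound v2 C2 p" "C2 \<ge> 0"
    unfolding ancient_poly_iff[OF p] by blast
  moreover have "backward_seq (v1 + v2) = (\<lambda>n x. backward_seq v1 n x + backward_seq v2 n x)"
    unfolding backward_seq_def by auto
  moreover have "growth_bound (v1 + v2) (C1 + C2) p"
    if "growth_bound v1 C1 p" "growth_bound v2 C2 p"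
    using that unfolding growth_bound_def
    by (auto simp: distrib_right intro!: abs_triangle_ineq[THEN order_trans] add_mono)
  ultimately show "v1 + v2 \<in> ancient_poly m w \<rho> p"
    unfolding ancient_poly_iff[OF p] by (intro conjI exI[of _ "C1 + C2"]) (auto intro: heat_seq_add)
next
  fix c and v assume "v \<in> ancient_poly m w \<rho> p"
  then obtain C where
    "\<forall>x t. 0 < t \<longrightarrow> v (x, t) = 0" "heat_seq (backward_seq v)" "growth_bound v C p" "C \<ge> 0"
    unfolding ancient_poly_iff[OF p] by blast
  moreover have "backward_seq (fscale c v) = (\<lambda>n x. c * backward_seq v n x)"
    unfolding backward_seq_def fscale_def by auto
  moreover have "growth_bound (fscale c v) (\<bar>c\<bar> * C) p" if "growth_bound v C p"
    using that unfolding growth_bound_def fscale_def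
    by (auto simp: abs_mult mult.assoc intro!: mult_left_mono)
  ultimately show "fscale c v \<in> ancient_poly m w \<rho> p"
    unfolding ancient_poly_iff[OF p]
    by (intro conjI exI[of _ "\<bar>c\<bar> * C"]) (auto simp: fscale_def intro: heat_seq_scale)
qed

lemma backward_seq_0: "backward_seq v 0 = (\<lambda>x. v (x, 0))"
  unfolding backward_seq_def by simp

lemma ancient_eq_0_if_final_eq_0:
  assumes v: "v \<in> ancient_poly m w \<rho> p" and final: "(\<lambda>x. v (x, 0)) = (\<lambda>x. 0)"
  shows "v = 0"
proof
  fix q :: "'v \<times> int"
  obtain x t where q: "q = (x, t)" by fastforce
  have "backward_seq v n = (\<lambda>x. 0)" for n
  proof (induction n)
    case (Suc n)
    then show ?case using heat_seq_backward_seq[OF v] unfolding heat_seq_def by simp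
  qed (simp add: backward_seq_0 final)
  moreover have "v (x, t) = backward_seq v (nat (- t)) x" if "t \<le> 0"
    using that unfolding backward_seq_def by simp
  ultimately show "v q = 0 q"
    using v q unfolding ancient_poly_def by (cases "t > 0") auto
qed

lemma funpow_neg_lap_final_eq_0:
  assumes v: "v \<in> ancient_poly m w \<rho> p" and p: "0 \<le> p" "p < 2 * real (Suc K)"
    and vol: "\<And>R. R > 0 \<Longrightarrow> (\<Sum>y\<in>B R. m y) \<le> CV * (1 + R) powr a"
  shows "(neg_lap ^^ Suc K) (\<lambda>x. v (x, 0)) = (\<lambda>x. 0)"
proof -
  obtain C where C: "C \<ge> 0" "growth_bound v C p"
    using v unfolding ancient_poly_iff[OF p(1)] by blast
  note U = heat_seq_backward_seq[OF v]
  note bound = growth_bound_backward_seq[OF C(2)]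
  obtain J where "\<And>n x. (neg_lap ^^ J) (backward_seq v n) x = 0"
    using funpow_neg_lap_eventually_zero[OF U bound vol C(1)] by blast
  then have "(neg_lap ^^ Suc K) (backward_seq v 0) x = 0" for x
    using funpow_neg_lap_vanishes[OF U C(1) p bound] by blast
  then show ?thesis unfolding backward_seq_0 by auto
qed

lemma funpow_neg_lap_final_mem_harm_poly:
  assumes v: "v \<in> ancient_poly m w \<rho> p" and p: "0 \<le> p"
    and zero: "(neg_lap ^^ Suc i) (\<lambda>x. v (x, 0)) = (\<lambda>x. 0)"
  shows "(neg_lap ^^ i) (\<lambda>x. v (x, 0)) \<in> harm_poly m w \<rho> p"
proof -
  obtain C where C: "C \<ge> 0" "growth_bound v C p"
    using v unfolding ancient_poly_iff[OF p] by blast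
  have "\<bar>(neg_lap ^^ i) (\<lambda>x. v (x, 0)) x\<bar> \<le> (2 ^ i * C * (2 + real i) powr p) * (1 + R) powr p"
    if R: "R > 0" and x: "x \<in> B R" for R x
  proof -
    define R' where "R' = R + real i + 1"
    have "\<bar>backward_seq v n x\<bar> \<le> C * ((2 + real i) powr p * (1 + R) powr p)"
      if "n \<le> 0 + i * 1" for n
    proof -
      have "R' \<ge> 1" "real n \<le> R'" using that R by (simp_all add: R'_def)
      moreover have "R' \<le> R'\<^sup>2" using power_increasing[of 1 2 R'] \<open>R' \<ge> 1\<close> by simp
      ultimately have "real n \<le> R'\<^sup>2" by linarith
      moreover have "x \<in> B R'" using x R by (simp add: rball_def R'_def)
      ultimately have "\<bar>backward_seq v n x\<bar> \<le> C * (1 + R') powr p"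
        using growth_bound_backward_seq[OF C(2)] \<open>R' \<ge> 1\<close> by simp
      also have "\<dots> \<le> C * ((2 + real i) * (1 + R)) powr p"
        using p R C(1) by (intro mult_left_mono powr_mono2) (auto simp: R'_def algebra_simps)
      finally show ?thesis using R by (simp add: powr_mult)
    qed
    then have "\<bar>(fwd_diff 1 ^^ i) (\<lambda>n. backward_seq v n x) 0\<bar>
        \<le> 2 ^ i * (C * ((2 + real i) powr p * (1 + R) powr p))"
      by (intro funpow_fwd_diff_bound) auto
    then show ?thesis
      unfolding funpow_fwd_diff_heat_seq[OF heat_seq_backward_seq[OF v]] backward_seq_0
      by (simp add: mult.assoc)
  qed
  moreover have "laplacian m w ((neg_lap ^^ i) (\<lambda>x. v (x, 0))) x = 0" for x
    using zero unfolding laplacian_eq_neg_lap by (simp add: fun_eq_iff)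
  ultimately show ?thesis unfolding harm_poly_def by blast
qed

lemma linear_funpow_neg_lap_final:
  "Vector_Spaces.linear fscale fscale (\<lambda>v :: 'v \<times> int \<Rightarrow> real. (neg_lap ^^ i) (\<lambda>x. v (x, 0)))"
  unfolding Vector_Spaces.linear_iff
  using vector_space_fscale[where 'a = "'v \<times> int"] vector_space_fscale[where 'a = 'v]
  by (simp add: funpow_neg_lap_add funpow_neg_lap_scale plus_fun_def fscale_def)

lemma span_card_bound_ancient_poly:
  assumes vol: "\<And>R. R > 0 \<Longrightarrow> (\<Sum>y\<in>B R. m y) \<le> CV * (1 + R) powr a"
    and p: "0 \<le> p" "p < 2 * real (Suc K)"
    and BH: "finite BH" "harm_poly m w \<rho> p \<subseteq> fs.span BH"
  shows "\<exists>T. finite T \<and> card T \<le> Suc K * card BH \<and> ancient_poly m w \<rho> p \<subseteq> fs.span T"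
proof (rule vector_space_pair.span_card_bound_filtration
    [where L = "\<lambda>i v. (neg_lap ^^ i) (\<lambda>x. v (x, 0))"])
  show "vector_space_pair (fscale :: real \<Rightarrow> ('v \<times> int \<Rightarrow> real) \<Rightarrow> _) fscale"
    by (simp add: vector_space_pair_def vector_space_fscale)
  show "fs.subspace (ancient_poly m w \<rho> p)" using p(1) by (rule subspace_ancient_poly)
  show "v = 0" if "v \<in> ancient_poly m w \<rho> p" "(neg_lap ^^ 0) (\<lambda>x. v (x, 0)) = 0" for v
    using that ancient_eq_0_if_final_eq_0 by (simp add: zero_fun_def)
  show "(neg_lap ^^ Suc K) (\<lambda>x. v (x, 0)) = 0" if "v \<in> ancient_poly m w \<rho> p" for v
    using funpow_neg_lap_final_eq_0[OF that p vol] by (simp add: zero_fun_def)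
  show "(neg_lap ^^ i) (\<lambda>x. v (x, 0)) \<in> fs.span BH"
    if "v \<in> ancient_poly m w \<rho> p" "(neg_lap ^^ Suc i) (\<lambda>x. v (x, 0)) = 0" for i v
    using funpow_neg_lap_final_mem_harm_poly[OF that(1) p(1) that(2)[unfolded zero_fun_def]] BH(2)
    by blast
qed (use BH(1) linear_funpow_neg_lap_final in auto)

end

theorem theorem1p3:
  fixes m :: "'v \<Rightarrow> real" and w :: "'v \<Rightarrow> 'v \<Rightarrow> real" and \<rho> :: "'v \<Rightarrow> 'v \<Rightarrow> real"
    and k :: real
  assumes "weighted_graph m w"
    and "intrinsic m w \<rho>"
    and "\<forall>x R. R > 0 \<longrightarrow> finite (rball \<rho> x R)"
    and "\<exists>s. \<forall>x y. adj w x y \<longrightarrow> \<rho> x y \<le> s"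
    and "\<exists>x0 \<alpha> C. \<forall>R>0. (\<Sum>y\<in>rball \<rho> x0 R. m y) \<le> C * (1 + R) powr \<alpha>"
    and "k \<ge> 1"
  shows "fdim (ancient_poly m w \<rho> (2 * k)) \<le> ereal (k + 1) * fdim (harm_poly m w \<rho> (2 * k))"
proof -
  obtain s where s: "\<forall>x y. adj w x y \<longrightarrow> \<rho> x y \<le> s" using assms(4) by blast
  obtain x0 \<alpha> CV where vol: "\<forall>R>0. (\<Sum>y\<in>rball \<rho> x0 R. m y) \<le> CV * (1 + R) powr \<alpha>"
    using assms(5) by blast
  interpret intrinsic_graph m w \<rho> x0 "max s 0"
    by unfold_locales (use assms(1-3) s in \<open>auto intro: order.trans[OF _ max.cobounded1]\<close>)
  define K where "K = nat \<lfloor>k\<rfloor>"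
  have K: "real (Suc K) \<le> k + 1" "2 * k < 2 * real (Suc K)"
    using assms(6) by (auto simp: K_def) linarith+
  show ?thesis
  proof (rule fdim_le_mult_fdim[OF K(1)])
    show "0 < k + 1" using assms(6) by simp
    show "\<exists>T. finite T \<and> card T \<le> Suc K * card BH \<and> ancient_poly m w \<rho> (2 * k) \<subseteq> fs.span T"
      if "finite BH" "harm_poly m w \<rho> (2 * k) \<subseteq> fs.span BH" for BH
      using span_card_bound_ancient_poly[OF vol[rule_format] _ K(2) that] assms(6) by simp
  qed
qed

end
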